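(* Consider the planner's problem \[ \min_{p,q,\omega\in\mathbb{R}^n,\ \theta\in\mathbb{R}^n}\ \sum_{j=1}^n J_j(p_j)+\tfrac12\omega^TD\omega \] subject to (with $\tilde\theta:=C^T\theta$) \[ q=p,\qquad \mathbf 1^T(q-d)=0,\qquad H^T(q-d)\le F,\qquad q-d-D\omega-CB\tilde\theta=0, \] and the problem \[ \text{(P2)}\quad \min_{q\in\mathbb{R}^{n}} \ \sum_{j=1}^{n} J_j(q_j) \quad\text{s.t.}\quad \mathbf 1^T(q-d)=0,\quad H^T(q-d)\le F . \] Then $(p^*,q^*,\omega^*,\tilde\theta^* )$ is an optimal solution to the planner's problem if and only if $p^*=q^*$, $\omega^*=0$, $\tilde\theta^*=C^TL^\dagger(q^*-d)$, and $q^*$ is an optimal solution to (P2).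
   Context: A power network is a connected directed graph $(\mathcal N,\mathcal E)$ with $\mathcal N=\{1,\dots,n\}$ (if $(j,k)\in\mathcal E$ then $(k,j)\notin\mathcal E$). $C\in\mathbb{R}^{n\times|\mathcal E|}$ is the incidence matrix: $C_{j,e}=1$ if $e=(j,k)\in\mathcal E$, $C_{j,e}=-1$ if $e=(k,j)\in\mathcal E$, $0$ otherwise. $B$ is an $|\mathcal E|\times|\mathcal E|$ diagonal matrix with positive diagonal entries; $D$ is an $n\times n$ diagonal matrix with positive diagonal entries. $L:=CBC^T$, $L^\dagger$ its Moore–Penrose inverse, and $H\in\mathbb{R}^{n\times2|\mathcal E|}$ is defined by $H^T=\begin{bmatrix} BC^TL^\dagger\\ -BC^TL^\dagger\end{bmatrix}$. $F:=\begin{bmatrix}\overline F\\ -\underline F\end{bmatrix}$ for given line limits $\underline F,\overline F\in\mathbb{R}^{|\mathcal E|}$. $d\in\mathbb{R}^n$ is given; each $J_j:\mathbb{R}\to\mathbb{R}$ is strictly convex and twice differentiable. *)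

theory Defs
  imports "HOL-Analysis.Analysis"
begin

definition incidence :: "('e \<Rightarrow> 'n) \<Rightarrow> ('e \<Rightarrow> 'n) \<Rightarrow> real^'e^'n" where
  "incidence src tgt = (\<chi> j e. if src e = j then 1 else if tgt e = j then -1 else 0)"

definition simple_oriented_graph :: "('e \<Rightarrow> 'n) \<Rightarrow> ('e \<Rightarrow> 'n) \<Rightarrow> bool" where
  "simple_oriented_graph src tgt \<longleftrightarrow>
     inj (\<lambda>e. (src e, tgt e)) \<and> (\<forall>e e'. \<not> (src e' = tgt e \<and> tgt e' = src e))"

definition graph_connected :: "('e \<Rightarrow> 'n) \<Rightarrow> ('e \<Rightarrow> 'n) \<Rightarrow> bool" where
  "graph_connected src tgt \<longleftrightarrow>
     (\<forall>j k. (\<lambda>a b. \<exists>e. (src e = a \<and> tgt e = b) \<or> (src e = b \<and> tgt e = a))\<^sup>*\<^sup>* j k)"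

definition pos_diag :: "real^'m^'m \<Rightarrow> bool" where
  "pos_diag M \<longleftrightarrow> (\<forall>i j. i \<noteq> j \<longrightarrow> M $ i $ j = 0) \<and> (\<forall>i. M $ i $ i > 0)"

definition is_moore_penrose :: "real^'m^'k \<Rightarrow> real^'k^'m \<Rightarrow> bool" where
  "is_moore_penrose A X \<longleftrightarrow> A ** X ** A = A \<and> X ** A ** X = X \<and>
     transpose (A ** X) = A ** X \<and> transpose (X ** A) = X ** A"

definition pinv :: "real^'m^'k \<Rightarrow> real^'k^'m" where
  "pinv A = (THE X. is_moore_penrose A X)"

definition Hmat :: "real^'e^'n \<Rightarrow> real^'e^'e \<Rightarrow> real^('e + 'e)^'n" where
  "Hmat C B = (let M = B ** transpose C ** pinv (C ** B ** transpose C) in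
     \<chi> j i. (case i of Inl e \<Rightarrow> M $ e $ j | Inr e \<Rightarrow> - (M $ e $ j)))"

definition Fvec :: "real^'e \<Rightarrow> real^'e \<Rightarrow> real^('e + 'e)" where
  "Fvec Flo Fup = (\<chi> i. case i of Inl e \<Rightarrow> Fup $ e | Inr e \<Rightarrow> - (Flo $ e))"

definition twice_differentiable :: "(real \<Rightarrow> real) \<Rightarrow> bool" where
  "twice_differentiable f \<longleftrightarrow> (\<forall>x. f differentiable at x) \<and> (\<forall>x. deriv f differentiable at x)"

definition strictly_convex :: "(real \<Rightarrow> real) \<Rightarrow> bool" where
  "strictly_convex f \<longleftrightarrow> (\<forall>x y t. x \<noteq> y \<and> 0 < t \<and> t < 1 \<longrightarrow>
     f ((1 - t) * x + t * y) < (1 - t) * f x + t * f y)"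

definition ones :: "real^'n" where "ones = (\<chi> i. 1)"

definition planner_feasible where
  "planner_feasible C B D H F d p q (\<omega>::real^'n) (\<theta>t::real^'e) \<longleftrightarrow>
     (\<exists>\<theta>. \<theta>t = transpose C *v \<theta>) \<and> q = p \<and> ones \<bullet> (q - d) = 0 \<and>
     (\<forall>i. (transpose H *v (q - d)) $ i \<le> F $ i) \<and>
     q - d - D *v \<omega> - C *v (B *v \<theta>t) = 0"

definition planner_obj :: "('n \<Rightarrow> real \<Rightarrow> real) \<Rightarrow> real^'n^'n \<Rightarrow> real^'n \<Rightarrow> real^'n \<Rightarrow> real" where
  "planner_obj J D p \<omega> = (\<Sum>j\<in>UNIV. J j (p $ j)) + (1/2) * (\<omega> \<bullet> (D *v \<omega>))"

definition planner_optimal where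
  "planner_optimal J C B D H F d p q \<omega> \<theta>t \<longleftrightarrow>
     planner_feasible C B D H F d p q \<omega> \<theta>t \<and>
     (\<forall>p' q' \<omega>' \<theta>t'. planner_feasible C B D H F d p' q' \<omega>' \<theta>t' \<longrightarrow>
        planner_obj J D p \<omega> \<le> planner_obj J D p' \<omega>')"

definition P2_feasible :: "real^'k^'n \<Rightarrow> real^'k \<Rightarrow> real^'n \<Rightarrow> real^'n \<Rightarrow> bool" where
  "P2_feasible H F d q \<longleftrightarrow> ones \<bullet> (q - d) = 0 \<and> (\<forall>i. (transpose H *v (q - d)) $ i \<le> F $ i)"

definition P2_optimal :: "('n \<Rightarrow> real \<Rightarrow> real) \<Rightarrow> real^'k^'n \<Rightarrow> real^'k \<Rightarrow> real^'n \<Rightarrow> real^'n \<Rightarrow> bool" where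
  "P2_optimal J H F d q \<longleftrightarrow> P2_feasible H F d q \<and>
     (\<forall>q'. P2_feasible H F d q' \<longrightarrow> (\<Sum>j\<in>UNIV. J j (q $ j)) \<le> (\<Sum>j\<in>UNIV. J j (q' $ j)))"

end

theory Submission
  imports Defs
begin

text \<open>A feasible point of (P2) lifts to a feasible point of the planner's problem with
  \<open>\<omega> = 0\<close> and angles \<open>C\<^sup>T L\<^sup>\<dagger> (q - d)\<close>: as the network is connected, the range of
  the weighted Laplacian \<open>L = C B C\<^sup>T\<close> is the orthogonal complement of the constants, so
  \<open>L L\<^sup>\<dagger> (q - d) = q - d\<close> once \<open>q - d\<close> sums to zero.  Conversely the planner's objective
  exceeds the (P2) objective of its \<open>q\<close> by the positive definite term \<open>\<omega>\<^sup>T D \<omega> / 2\<close>, so an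
  optimum has \<open>\<omega> = 0\<close>; its angles are then forced because \<open>C\<^sup>T L\<^sup>\<dagger> L = C\<^sup>T\<close>, and both problems
  minimise the same function over the same set of \<open>q\<close>.  The pseudoinverse is computed
  explicitly as \<open>(L + P)\<^sup>-\<^sup>1 - P\<close>, with \<open>P\<close> the orthogonal projection onto the constants.\<close>

declare transpose_matrix_vector [simp del]

lemma matrix_add_rdistrib: "((A::real^'n^'m) + B) ** C = A ** C + B ** C"
  by (simp add: matrix_matrix_mult_def vec_eq_iff sum.distrib algebra_simps)

lemma matrix_diff_ldistrib: "(A::real^'n^'m) ** (B - C) = A ** B - A ** C"
  by (simp add: matrix_matrix_mult_def vec_eq_iff sum_subtractf algebra_simps)

lemma matrix_diff_rdistrib: "((A::real^'n^'m) - B) ** C = A ** C - B ** C"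
  by (simp add: matrix_matrix_mult_def vec_eq_iff sum_subtractf algebra_simps)

lemma transpose_diff: "transpose ((A::real^'n^'m) - B) = transpose A - transpose B"
  by (simp add: transpose_def vec_eq_iff)

lemma inner_matrix_vector: "(x::real^'m) \<bullet> ((A::real^'n^'m) *v y) = (transpose A *v x) \<bullet> y"
  by (metis dot_lmul_matrix transpose_matrix_vector)

lemma inner_ones_smult: "ones \<bullet> (c *s (ones::real^'n)) = c * real CARD('n)"
  by (simp add: ones_def inner_vec_def)

lemma pos_diag_mult_vec:
  assumes "pos_diag D"
  shows "(D *v y) $ i = D $ i $ i * y $ i"
proof -
  have "(D *v y) $ i = (\<Sum>j\<in>UNIV. D $ i $ j * y $ j)"
    by (simp add: matrix_vector_mult_def)
  also have "\<dots> = (\<Sum>j\<in>UNIV. if j = i then D $ i $ i * y $ i else 0)"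
    using assms by (intro sum.cong) (auto simp: pos_diag_def)
  finally show ?thesis by simp
qed

lemma pos_diag_quadratic_form: "pos_diag D \<Longrightarrow> y \<bullet> (D *v y) = (\<Sum>i\<in>UNIV. D $ i $ i * (y $ i)\<^sup>2)"
  by (simp add: inner_vec_def pos_diag_mult_vec power2_eq_square algebra_simps)

lemma pos_diag_quadratic_nonneg: "pos_diag D \<Longrightarrow> 0 \<le> y \<bullet> (D *v y)"
  by (simp add: pos_diag_quadratic_form sum_nonneg pos_diag_def less_imp_le)

lemma pos_diag_quadratic_eq_0_iff:
  assumes "pos_diag D"
  shows "y \<bullet> (D *v y) = 0 \<longleftrightarrow> y = 0"
proof
  assume "y \<bullet> (D *v y) = 0"
  moreover have "\<forall>i\<in>UNIV. 0 \<le> D $ i $ i * (y $ i)\<^sup>2"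
    using assms by (simp add: pos_diag_def less_imp_le)
  ultimately have "\<forall>i. D $ i $ i * (y $ i)\<^sup>2 = 0"
    using pos_diag_quadratic_form[OF assms] by (simp add: sum_nonneg_eq_0_iff)
  with assms show "y = 0"
    by (auto simp: vec_eq_iff pos_diag_def) (metis less_irrefl)
qed simp

lemma transpose_pos_diag: "pos_diag D \<Longrightarrow> transpose D = D"
  by (simp add: pos_diag_def transpose_def vec_eq_iff) metis

subsection \<open>The Moore--Penrose inverse\<close>

lemma moore_penrose_unique:
  assumes X: "is_moore_penrose A X" and Y: "is_moore_penrose A Y"
  shows "X = Y"
proof -
  note X' = X[unfolded is_moore_penrose_def] and Y' = Y[unfolded is_moore_penrose_def]
  have "X = X ** transpose (A ** X)"
    using X' by (simp add: matrix_mul_assoc)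
  also have "\<dots> = X ** transpose (A ** Y ** A ** X)"
    using Y' by simp
  also have "\<dots> = X ** (transpose (A ** X) ** transpose (A ** Y))"
    by (simp add: matrix_transpose_mul matrix_mul_assoc)
  also have "\<dots> = X ** A ** Y"
    using X' Y' by (simp add: matrix_mul_assoc)
  also have "\<dots> = (transpose (X ** A) ** transpose (Y ** A)) ** Y"
    using X' Y' by (metis matrix_mul_assoc)
  also have "\<dots> = transpose (Y ** (A ** X ** A)) ** Y"
    by (simp add: matrix_transpose_mul matrix_mul_assoc)
  also have "\<dots> = Y"
    using X' Y' by (simp add: matrix_mul_assoc)
  finally show ?thesis .
qed

lemma pinv_eqI: "is_moore_penrose A X \<Longrightarrow> pinv A = X"
  unfolding pinv_def by (blast intro: moore_penrose_unique)

subsection \<open>Symmetric matrices whose kernel consists of the constant vectors\<close>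

definition mean_matrix :: "real^'n^'n" where
  "mean_matrix = (\<chi> i j. 1 / real CARD('n))"

lemma mean_matrix_mult_vec: "mean_matrix *v x = ((ones \<bullet> x) / real CARD('n)) *s (ones::real^'n)"
  by (simp add: mean_matrix_def matrix_vector_mult_def inner_vec_def ones_def vec_eq_iff
      sum_divide_distrib)

lemma mean_matrix_idem: "mean_matrix ** mean_matrix = (mean_matrix :: real^'n^'n)"
  by (simp add: mean_matrix_def matrix_matrix_mult_def vec_eq_iff)

lemma transpose_mean_matrix: "transpose mean_matrix = mean_matrix"
  by (simp add: mean_matrix_def transpose_def)

lemma matrix_mult_mean_matrix_eq_0:
  assumes "L *v ones = 0"
  shows "L ** mean_matrix = 0"
proof -
  have "(\<Sum>k\<in>UNIV. L $ i $ k) = 0" for i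
    using arg_cong[OF assms, of "\<lambda>v. v $ i"] by (simp add: matrix_vector_mult_def ones_def)
  then show ?thesis
    by (simp add: mean_matrix_def matrix_matrix_mult_def vec_eq_iff sum_divide_distrib[symmetric])
qed

context
  fixes L :: "real^'n^'n"
  assumes L_sym: "transpose L = L"
    and L_ones: "L *v ones = 0"
    and L_kernel: "\<And>x. L *v x = 0 \<Longrightarrow> \<exists>c. x = c *s ones"
begin

lemma mean_matrix_mult_eq_0: "mean_matrix ** L = 0"
proof -
  have "mean_matrix ** L = transpose (L ** mean_matrix)"
    by (simp add: matrix_transpose_mul L_sym transpose_mean_matrix)
  then show ?thesis
    by (simp add: matrix_mult_mean_matrix_eq_0 L_ones transpose_def vec_eq_iff)
qed

lemma inner_ones_mult_vec: "ones \<bullet> (L *v x) = 0"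
  by (simp add: inner_matrix_vector L_sym L_ones)

lemma left_invertible_plus_mean_matrix: "\<exists>N. N ** (L + mean_matrix) = mat 1"
  unfolding matrix_left_invertible_ker
proof (intro allI impI)
  fix x :: "real^'n"
  assume Mx: "(L + mean_matrix) *v x = 0"
  have "ones \<bullet> ((L + mean_matrix) *v x) = ones \<bullet> x"
    by (simp add: matrix_vector_mult_add_rdistrib inner_add_right inner_ones_mult_vec
        mean_matrix_mult_vec inner_ones_smult)
  with Mx have sum0: "ones \<bullet> x = 0" by simp
  with Mx have "L *v x = 0"
    by (simp add: matrix_vector_mult_add_rdistrib mean_matrix_mult_vec)
  then obtain c where c: "x = c *s ones" using L_kernel by blast
  with sum0 have "c = 0" by (simp add: inner_ones_smult)
  with c show "x = 0" by simp
qed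

lemma symmetric_constant_kernel_pinv: "L ** pinv L = mat 1 - mean_matrix" "pinv L ** L = mat 1 - mean_matrix"
proof -
  let ?P = "mean_matrix :: real^'n^'n"
  have LP: "L ** ?P = 0" and PL: "?P ** L = 0"
    by (simp_all add: matrix_mult_mean_matrix_eq_0 L_ones mean_matrix_mult_eq_0)
  obtain N where NM: "N ** (L + ?P) = mat 1"
    using left_invertible_plus_mean_matrix by blast
  then have MN: "(L + ?P) ** N = mat 1"
    using matrix_left_right_inverse by blast
  have MP: "(L + ?P) ** ?P = ?P" and PM: "?P ** (L + ?P) = ?P"
    by (simp_all add: matrix_add_rdistrib matrix_add_ldistrib LP PL mean_matrix_idem)
  have NP: "N ** ?P = ?P"
    using arg_cong[OF MP, of "(**) N"] by (simp add: matrix_mul_assoc NM)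
  have PN: "?P ** N = ?P"
    using arg_cong[OF PM, of "\<lambda>Z. Z ** N"] by (simp add: matrix_mul_assoc[symmetric] MN)
  define X where "X = N - ?P"
  have "L ** X = (L + ?P) ** N - ?P ** N"
    by (simp add: X_def matrix_diff_ldistrib matrix_add_rdistrib LP)
  then have LX: "L ** X = mat 1 - ?P"
    by (simp add: MN PN)
  have "X ** L = N ** (L + ?P) - N ** ?P"
    by (simp add: X_def matrix_diff_rdistrib matrix_add_ldistrib PL)
  then have XL: "X ** L = mat 1 - ?P"
    by (simp add: NM NP)
  have PX: "?P ** X = 0"
    by (simp add: X_def matrix_diff_ldistrib PN mean_matrix_idem)
  have "is_moore_penrose L X"
    unfolding is_moore_penrose_def LX XL
    by (simp add: matrix_diff_rdistrib PL PX transpose_diff transpose_mean_matrix)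
  with LX XL show "L ** pinv L = mat 1 - ?P" "pinv L ** L = mat 1 - ?P"
    by (simp_all add: pinv_eqI)
qed

end

subsection \<open>The weighted Laplacian of a connected network\<close>

lemma simple_oriented_graph_no_loops: "simple_oriented_graph src tgt \<Longrightarrow> src e \<noteq> tgt e"
  unfolding simple_oriented_graph_def by metis

lemma incidence_transpose_mult_vec:
  assumes "src e \<noteq> tgt e"
  shows "(transpose (incidence src tgt) *v x) $ e = x $ src e - x $ tgt e"
proof -
  have "(transpose (incidence src tgt) *v x) $ e
      = (\<Sum>j\<in>UNIV. (if j = src e then x $ j else 0) - (if j = tgt e then x $ j else 0))"
    unfolding matrix_vector_mult_def transpose_def incidence_def
    using assms by (auto intro: sum.cong)
  then show ?thesis
    by (simp add: sum_subtractf)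
qed

lemma incidence_transpose_ones:
  "(\<And>e. src e \<noteq> tgt e) \<Longrightarrow> transpose (incidence src tgt) *v ones = 0"
  by (simp add: vec_eq_iff incidence_transpose_mult_vec ones_def)

lemma incidence_transpose_kernel:
  assumes loopfree: "\<And>e. src e \<noteq> tgt e" and conn: "graph_connected src tgt"
    and x: "transpose (incidence src tgt) *v x = 0"
  shows "\<exists>c. x = c *s ones"
proof -
  have edge: "x $ src e = x $ tgt e" for e
    using arg_cong[OF x, of "\<lambda>v. v $ e"] by (simp add: incidence_transpose_mult_vec loopfree)
  have "x $ j = x $ k" for j k
    using conn[unfolded graph_connected_def, rule_format, of j k]
    by (induction rule: rtranclp_induct) (auto simp: edge)
  then have "x = (x $ undefined) *s ones"
    by (simp add: vec_eq_iff ones_def)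
  then show ?thesis ..
qed

lemma laplacian_mult_vec: "(C ** B ** transpose C) *v x = C *v (B *v (transpose C *v x))"
  by (simp add: matrix_vector_mul_assoc matrix_mul_assoc)

locale connected_network =
  fixes C :: "real^'e^'n" and B :: "real^'e^'e"
  assumes C_ones: "transpose C *v ones = 0"
    and C_kernel: "\<And>x. transpose C *v x = 0 \<Longrightarrow> \<exists>c. x = c *s ones"
    and B_pos: "pos_diag B"
begin

lemma laplacian_kernel:
  assumes "(C ** B ** transpose C) *v x = 0"
  shows "transpose C *v x = 0"
proof -
  have "(transpose C *v x) \<bullet> (B *v (transpose C *v x)) = x \<bullet> ((C ** B ** transpose C) *v x)"
    by (simp add: laplacian_mult_vec inner_matrix_vector)
  with assms show ?thesis
    by (simp add: pos_diag_quadratic_eq_0_iff[OF B_pos])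
qed

lemma laplacian_pinv_mult_self:
  defines "L \<equiv> C ** B ** transpose C"
  shows "L ** pinv L = mat 1 - mean_matrix" "pinv L ** L = mat 1 - mean_matrix"
proof -
  have "transpose L = L"
    by (simp add: L_def matrix_transpose_mul transpose_pos_diag[OF B_pos] matrix_mul_assoc)
  moreover have "L *v ones = 0"
    by (simp add: L_def laplacian_mult_vec C_ones)
  moreover have "\<exists>c. x = c *s ones" if "L *v x = 0" for x
    using that laplacian_kernel C_kernel unfolding L_def by blast
  ultimately show "L ** pinv L = mat 1 - mean_matrix" "pinv L ** L = mat 1 - mean_matrix"
    using symmetric_constant_kernel_pinv by blast+
qed

lemma laplacian_pinv_solves:
  defines "L \<equiv> C ** B ** transpose C"
  assumes "ones \<bullet> x = 0"
  shows "L *v (pinv L *v x) = x"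
  using assms laplacian_pinv_mult_self(1)
  by (simp add: matrix_vector_mul_assoc matrix_vector_mult_diff_rdistrib mean_matrix_mult_vec)

lemma incidence_transpose_pinv_laplacian:
  defines "L \<equiv> C ** B ** transpose C"
  shows "transpose C *v (pinv L *v (L *v \<theta>)) = transpose C *v \<theta>"
proof -
  have "pinv L *v (L *v \<theta>) = \<theta> - mean_matrix *v \<theta>"
    using laplacian_pinv_mult_self(2)[folded L_def]
    by (simp add: matrix_vector_mul_assoc matrix_vector_mult_diff_rdistrib)
  then show ?thesis
    by (simp add: matrix_vector_mult_diff_distrib mean_matrix_mult_vec vector_scalar_commute C_ones)
qed

end

lemma planner_feasible_imp_P2_feasible:
  "planner_feasible C B D H F d p q \<omega> \<theta>t \<Longrightarrow> p = q \<and> P2_feasible H F d q"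
  by (auto simp: planner_feasible_def P2_feasible_def)

lemma planner_obj_zero: "planner_obj J D p 0 = (\<Sum>j\<in>UNIV. J j (p $ j))"
  by (simp add: planner_obj_def)

context connected_network
begin

lemma planner_feasible_of_P2_feasible:
  assumes "P2_feasible H F d q"
  shows "planner_feasible C B D H F d q q 0
           (transpose C *v (pinv (C ** B ** transpose C) *v (q - d)))"
  using assms laplacian_pinv_solves
  by (auto simp: planner_feasible_def P2_feasible_def laplacian_mult_vec)

lemma planner_feasible_angles:
  assumes "planner_feasible C B D H F d p q 0 \<theta>t"
  shows "\<theta>t = transpose C *v (pinv (C ** B ** transpose C) *v (q - d))"
proof -
  from assms obtain \<theta> where \<theta>: "\<theta>t = transpose C *v \<theta>"
    and "q - d = C *v (B *v \<theta>t)"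
    by (auto simp: planner_feasible_def)
  then have "q - d = (C ** B ** transpose C) *v \<theta>"
    by (simp add: laplacian_mult_vec)
  with \<theta> show ?thesis
    by (simp add: incidence_transpose_pinv_laplacian)
qed

text \<open>Any feasible point costs at least as much as the point with the same \<open>q\<close> and
  \<open>\<omega> = 0\<close>, so only those points need to be compared with.\<close>

lemma planner_optimal_iff:
  assumes "pos_diag D"
  shows "planner_optimal J C B D H F d p q \<omega> \<theta>t \<longleftrightarrow>
    planner_feasible C B D H F d p q \<omega> \<theta>t \<and>
    (\<forall>q'. P2_feasible H F d q' \<longrightarrow> planner_obj J D p \<omega> \<le> (\<Sum>j\<in>UNIV. J j (q' $ j)))"
proof -
  have "planner_obj J D p \<omega> \<le> planner_obj J D p' \<omega>'"
    if "P2_feasible H F d q' \<longrightarrow> planner_obj J D p \<omega> \<le> (\<Sum>j\<in>UNIV. J j (q' $ j))"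
      and "planner_feasible C B D H F d p' q' \<omega>' \<theta>t'" for p' q' \<omega>' \<theta>t'
    using that planner_feasible_imp_P2_feasible pos_diag_quadratic_nonneg[OF assms, of \<omega>']
    by (fastforce simp: planner_obj_def)
  then show ?thesis
    unfolding planner_optimal_def
    by (metis planner_feasible_of_P2_feasible planner_obj_zero)
qed

end

theorem theorem1:
  fixes src tgt :: "'e::finite \<Rightarrow> 'n::finite"
    and B :: "real^'e^'e" and D :: "real^'n^'n"
    and Flo Fup :: "real^'e" and d :: "real^'n"
    and J :: "'n \<Rightarrow> real \<Rightarrow> real"
    and p q \<omega> :: "real^'n" and \<theta>t :: "real^'e"
  assumes "simple_oriented_graph src tgt"
    and "graph_connected src tgt"
    and "pos_diag B" and "pos_diag D"
    and "\<And>j. strictly_convex (J j)"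
    and "\<And>j. twice_differentiable (J j)"
  defines "C \<equiv> incidence src tgt"
  defines "L \<equiv> C ** B ** transpose C"
  defines "H \<equiv> Hmat C B"
  defines "F \<equiv> Fvec Flo Fup"
  shows "planner_optimal J C B D H F d p q \<omega> \<theta>t \<longleftrightarrow>
     (p = q \<and> \<omega> = 0 \<and> \<theta>t = transpose C *v (pinv L *v (q - d)) \<and> P2_optimal J H F d q)"
proof -
  have loopfree: "\<And>e. src e \<noteq> tgt e"
    using assms(1) by (rule simple_oriented_graph_no_loops)
  interpret connected_network C B
    unfolding C_def
    by unfold_locales (use loopfree assms(2,3) in \<open>auto intro: incidence_transpose_ones
        incidence_transpose_kernel\<close>)
  note optimal_iff = planner_optimal_iff[OF \<open>pos_diag D\<close>]
  show ?thesis
  proof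
    assume opt: "planner_optimal J C B D H F d p q \<omega> \<theta>t"
    then have feas: "planner_feasible C B D H F d p q \<omega> \<theta>t"
      by (simp add: optimal_iff)
    then have p_eq: "p = q" and P2: "P2_feasible H F d q"
      using planner_feasible_imp_P2_feasible by blast+
    with opt have "\<omega> \<bullet> (D *v \<omega>) \<le> 0"
      by (auto simp: optimal_iff planner_obj_def)
    then have "\<omega> = 0"
      using pos_diag_quadratic_nonneg pos_diag_quadratic_eq_0_iff \<open>pos_diag D\<close>
      by (metis order_antisym)
    with feas opt P2 p_eq show "p = q \<and> \<omega> = 0 \<and> \<theta>t = transpose C *v (pinv L *v (q - d)) \<and>
        P2_optimal J H F d q"
      by (auto simp: L_def planner_feasible_angles optimal_iff P2_optimal_def
          planner_obj_zero)
  next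
    assume "p = q \<and> \<omega> = 0 \<and> \<theta>t = transpose C *v (pinv L *v (q - d)) \<and> P2_optimal J H F d q"
    then show "planner_optimal J C B D H F d p q \<omega> \<theta>t"
      by (auto simp: L_def optimal_iff P2_optimal_def planner_obj_zero
          planner_feasible_of_P2_feasible)
  qed
qed

end
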